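(* Let $\sigma$ be a completely erasing $k$-block substitution with $w_\epsilon\ne1^k$ that satisfies the optimality condition. Suppose $$\lim_{|w|\to\infty}\frac{|w|}{\epsilon(w)}=\infty,$$ meaning that for every $M>0$ there is $N$ such that $|w|/\epsilon(w)>M$ for all $w\in\{0,1\}^*$ with $|w|>N$. Then every point $x\in\mathbb I$ is a full entropy point of $f_\sigma$: for every closed neighborhood $K$ of $x$ in $\mathbb I$, $h(f_\sigma,K)=h(f_\sigma)=\infty$.
   Context: Notation: $\mathbb I=[0,1]$. $\{0,1\}^*$ and $\{0,1\}^\omega$ denote finite and infinite binary words, and $\epsilon$ is the empty word. For a word $w$, set $0.w=\sum_iw_i2^{-i}$. For $x\in(0,1]$, $\widetilde x$ is the unique infinite binary expansion of $x$ not ending in $0^\infty$. Fix $k\ge2$. An erasing $k$-block substitution is a map $\sigma:\{0,1\}^k\to\{0,1\}^*$ with exactly one block $w_\epsilon$ such that $\sigma(w_\epsilon)=\epsilon$. $\sigma$ is alternating if there are $\sigma_1,\dots,\sigma_k:\{0,1\}\to\{0,1\}^*$ with $\sigma(b_1\cdots b_k)=\sigma_1(b_1)\cdots\sigma_k(b_k)$. It is then extended to all finite or infinite words by $\sigma(u)=\prod_j\sigma_{((j-1)\bmod k)+1}(u_j)$. $\sigma$ is completely erasing if it is erasing and alternating, and every $w\in\{0,1\}^*$ satisfies $\sigma^n(w)=\epsilon$ for some $n\in\mathbb N$. The least such $n$ is the vanishing order $\epsilon(w)$. The map $f_\sigma:\mathbb I\to\mathbb I$ is defined by $f_\sigma(x)=0.\sigma(\widetilde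 x)$ if $x\in(0,1]$ and $\widetilde x\neq w_\epsilon^\infty$, and $f_\sigma(x)=0$ otherwise. Optimality condition: every $w\in\{0,1\}^\omega$ can be written as $w=\prod_{i\ge1}\sigma(b_i)$ with blocks $b_i\in\{0,1\}^k$ satisfying $\sigma(b_i)\ne\epsilon$. Topological entropy: let $d_n(x,y)=\max_{0\le i\le n}|f^i(x)-f^i(y)|$. A set $S$ is $(n,\delta)$-separated if $d_n(x,y)\ge\delta$ for all distinct $x,y\in S$. For $K\subseteq\mathbb I$, let $s_K(n,\delta)$ be the maximal cardinality of an $(n,\delta)$-separated subset of $K$. Then $h(f,K)=\lim_{\delta\to0}\limsup_{n\to\infty}\frac1n\log s_K(n,\delta)$ and $h(f)=h(f,\mathbb I)$. *)

theory Defs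
  imports "HOL-Analysis.Analysis"
begin

(* Finite binary words: bool list (True = 1).  Infinite words: nat => bool,
   positions indexed from 0.  An alternating k-block substitution is given by
   its component maps  s i :: bool => bool list  for i = 0..k-1
   (s i corresponds to sigma_{i+1} in the paper). *)

definition sub_word :: "nat \<Rightarrow> (nat \<Rightarrow> bool \<Rightarrow> bool list) \<Rightarrow> bool list \<Rightarrow> bool list" where
  "sub_word k s u = concat (map (\<lambda>j. s (j mod k) (u ! j)) [0..<length u])"

definition blocks :: "nat \<Rightarrow> bool list set" where
  "blocks k = {b. length b = k}"

definition erasing :: "nat \<Rightarrow> (nat \<Rightarrow> bool \<Rightarrow> bool list) \<Rightarrow> bool" where
  "erasing k s \<longleftrightarrow> (\<exists>!b. b \<in> blocks k \<and> sub_word k s b = [])"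

definition w_eps :: "nat \<Rightarrow> (nat \<Rightarrow> bool \<Rightarrow> bool list) \<Rightarrow> bool list" where
  "w_eps k s = (THE b. b \<in> blocks k \<and> sub_word k s b = [])"

definition completely_erasing :: "nat \<Rightarrow> (nat \<Rightarrow> bool \<Rightarrow> bool list) \<Rightarrow> bool" where
  "completely_erasing k s \<longleftrightarrow> erasing k s \<and> (\<forall>w. \<exists>n. (sub_word k s ^^ n) w = [])"

definition van_order :: "nat \<Rightarrow> (nat \<Rightarrow> bool \<Rightarrow> bool list) \<Rightarrow> bool list \<Rightarrow> nat" where
  "van_order k s w = (LEAST n. (sub_word k s ^^ n) w = [])"

definition binval :: "bool list \<Rightarrow> real" where
  "binval w = (\<Sum>i<length w. (if w ! i then 1 else 0) / 2 ^ (i + 1))"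

definition binval_inf :: "(nat \<Rightarrow> bool) \<Rightarrow> real" where
  "binval_inf w = (\<Sum>i. (if w i then 1 else 0) / 2 ^ (i + 1))"

definition prefix_word :: "(nat \<Rightarrow> bool) \<Rightarrow> nat \<Rightarrow> bool list" where
  "prefix_word w n = map w [0..<n]"

definition tilde :: "real \<Rightarrow> (nat \<Rightarrow> bool)" where
  "tilde x = (THE w. (\<forall>N. \<exists>n\<ge>N. w n) \<and> binval_inf w = x)"

(* 0.sigma(w) for an infinite word w; sigma(w) may be finite or infinite;
   its value is the limit (= supremum) of the values of sigma applied to prefixes *)
definition sub_inf_val :: "nat \<Rightarrow> (nat \<Rightarrow> bool \<Rightarrow> bool list) \<Rightarrow> (nat \<Rightarrow> bool) \<Rightarrow> real" where
  "sub_inf_val k s w = (SUP n. binval (sub_word k s (prefix_word w n)))"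

definition f_sigma :: "nat \<Rightarrow> (nat \<Rightarrow> bool \<Rightarrow> bool list) \<Rightarrow> real \<Rightarrow> real" where
  "f_sigma k s x =
     (if 0 < x \<and> x \<le> 1 \<and> tilde x \<noteq> (\<lambda>n. w_eps k s ! (n mod k))
      then sub_inf_val k s (tilde x) else 0)"

definition optimal :: "nat \<Rightarrow> (nat \<Rightarrow> bool \<Rightarrow> bool list) \<Rightarrow> bool" where
  "optimal k s \<longleftrightarrow>
     (\<forall>w :: nat \<Rightarrow> bool. \<exists>b :: nat \<Rightarrow> bool list.
        (\<forall>i. b i \<in> blocks k \<and> sub_word k s (b i) \<noteq> []) \<and>
        (\<forall>m. let u = concat (map (\<lambda>i. sub_word k s (b i)) [0..<m])
             in prefix_word w (length u) = u))"

definition dist_n :: "(real \<Rightarrow> real) \<Rightarrow> nat \<Rightarrow> real \<Rightarrow> real \<Rightarrow> real" where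
  "dist_n f n x y = Max ((\<lambda>i. \<bar>(f ^^ i) x - (f ^^ i) y\<bar>) ` {0..n})"

definition separated :: "(real \<Rightarrow> real) \<Rightarrow> nat \<Rightarrow> real \<Rightarrow> real set \<Rightarrow> bool" where
  "separated f n \<delta> S \<longleftrightarrow> (\<forall>x\<in>S. \<forall>y\<in>S. x \<noteq> y \<longrightarrow> dist_n f n x y \<ge> \<delta>)"

definition sep_card :: "(real \<Rightarrow> real) \<Rightarrow> real set \<Rightarrow> nat \<Rightarrow> real \<Rightarrow> ereal" where
  "sep_card f K n \<delta> = (SUP S\<in>{S. S \<subseteq> K \<and> finite S \<and> separated f n \<delta> S}. ereal (real (card S)))"

definition elog :: "ereal \<Rightarrow> ereal" where
  "elog t = (if t = \<infinity> then \<infinity> else ereal (ln (real_of_ereal t)))"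

definition entropy_on :: "(real \<Rightarrow> real) \<Rightarrow> real set \<Rightarrow> ereal" where
  "entropy_on f K =
     Lim (at_right (0::real))
       (\<lambda>\<delta>. limsup (\<lambda>n. elog (sep_card f K n \<delta>) / ereal (real n)))"

definition entropy :: "(real \<Rightarrow> real) \<Rightarrow> ereal" where
  "entropy f = entropy_on f {0..1}"

end

theory Submission
  imports Defs
begin

text \<open>Write \<open>\<sigma>\<^sub>r\<close> for \<open>\<sigma>\<close> applied to a word that starts at position \<open>r\<close> of the block
  decomposition. By optimality every infinite word is \<open>\<sigma>\<^sub>r(v)\<close> for some \<open>v\<close> (prepend the tail of
  \<open>w\<^sub>\<epsilon>\<close> completing the current block, which is erased), and since eventually periodic words
  have eventually periodic images, a word that is not eventually periodic has a preimage with the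
  same property. Such words have infinitely many \<open>1\<close>s, so \<open>f\<^sub>\<sigma>(0.y) = 0.\<sigma>(y)\<close> for them.
  Hence for every finite word \<open>u\<close> and aperiodic \<open>z\<close> some point \<open>0.uv\<close> is mapped to \<open>0.z\<close> by
  \<open>f\<^sub>\<sigma>\<^sup>\<epsilon>\<^sup>(\<^sup>u\<^sup>)\<close>.

  Start in a dyadic cylinder inside \<open>K\<close> and let the orbit read \<open>j\<close> codes \<open>b 0\<close> with \<open>|b| = q\<close>,
  one after the other. Distinct choices of codes give \<open>2^(q j)\<close> points of \<open>K\<close> whose orbits are
  \<open>2^-(q+1)\<close> apart when the first differing code is read. If \<open>|w|/\<epsilon>(w) > M\<close> for all long
  \<open>w\<close>, each code is erased within \<open>T \<le> 4q/M\<close> steps, so at scale \<open>2^-(q+1)\<close> the number of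
  separated orbit segments of length \<open>n\<close> grows with exponential rate at least \<open>q ln 2 / (2T) \<ge> M ln 2 / 8\<close>.
  As \<open>M\<close> is arbitrary, the entropy on \<open>K\<close> is infinite.\<close>

section \<open>Infinite words\<close>

definition append_inf :: "'a list \<Rightarrow> (nat \<Rightarrow> 'a) \<Rightarrow> nat \<Rightarrow> 'a" where
  "append_inf u v = (\<lambda>n. if n < length u then u ! n else v (n - length u))"

definition prefix_inf :: "'a list \<Rightarrow> (nat \<Rightarrow> 'a) \<Rightarrow> bool" where
  "prefix_inf u z \<longleftrightarrow> (\<forall>i<length u. z i = u ! i)"

lemma length_prefix_word [simp]: "length (prefix_word v n) = n"
  by (simp add: prefix_word_def)

lemma nth_prefix_word [simp]: "i < n \<Longrightarrow> prefix_word v n ! i = v i"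
  by (simp add: prefix_word_def)

lemma prefix_word_0 [simp]: "prefix_word v 0 = []"
  by (simp add: prefix_word_def)

lemma prefix_word_Suc: "prefix_word v (Suc n) = prefix_word v n @ [v n]"
  by (simp add: prefix_word_def)

lemma prefix_word_cong: "(\<And>i. i < n \<Longrightarrow> v i = w i) \<Longrightarrow> prefix_word v n = prefix_word w n"
  by (simp add: prefix_word_def)

lemma prefix_word_take: "n \<le> m \<Longrightarrow> prefix_word v n = take n (prefix_word v m)"
  by (auto intro!: nth_equalityI)

lemma prefix_word_add: "prefix_word v (n + m) = prefix_word v n @ prefix_word (\<lambda>i. v (n + i)) m"
  by (rule nth_equalityI) (auto simp: nth_append)

lemma prefix_word_append_inf:
  "prefix_word (append_inf u v) n =
     (if n \<le> length u then take n u else u @ prefix_word v (n - length u))"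
  by (auto intro!: nth_equalityI simp: append_inf_def nth_append)

lemma append_inf_Nil [simp]: "append_inf [] v = v"
  by (simp add: append_inf_def)

lemma prefix_inf_iff_prefix_word: "prefix_inf u z \<longleftrightarrow> prefix_word z (length u) = u"
  by (auto simp: prefix_inf_def list_eq_iff_nth_eq)

lemma prefix_inf_appendD: "prefix_inf (u @ u') z \<Longrightarrow> prefix_inf u z"
  by (auto simp: prefix_inf_def nth_append)

lemma prefix_inf_append_inf: "prefix_inf u' z \<Longrightarrow> prefix_inf (u @ u') (append_inf u z)"
  by (auto simp: prefix_inf_def append_inf_def nth_append)

lemma prefix_inf_append_inf_self: "prefix_inf u (append_inf u z)"
  by (auto simp: prefix_inf_def append_inf_def)

lemma nth_concat_replicate:
  "i < j * length u \<Longrightarrow> concat (replicate j u) ! i = u ! (i mod length u)"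
proof (induction j arbitrary: i)
  case (Suc j)
  show ?case
  proof (cases "i < length u")
    case False
    then have "i - length u < j * length u" "(i - length u) mod length u = i mod length u"
      using Suc.prems by (auto simp: le_mod_geq)
    then show ?thesis using False Suc.IH by (simp add: nth_append)
  qed (simp add: nth_append)
qed simp

definition eventually_periodic :: "(nat \<Rightarrow> 'a) \<Rightarrow> bool" where
  "eventually_periodic z \<longleftrightarrow> (\<exists>N P. 0 < P \<and> (\<forall>n\<ge>N. z (n + P) = z n))"

lemma periodic_add_mult:
  fixes z :: "nat \<Rightarrow> 'a" and m :: nat
  assumes "\<forall>n\<ge>N. z (n + P) = z n" "N \<le> n"
  shows "z (n + m * P) = z n"
proof (induction m)
  case (Suc m)
  then show ?case using assms by (metis add.assoc le_add1 mult_Suc order_trans add.commute)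
qed simp

lemma eventually_periodic_append_infD:
  assumes "eventually_periodic (append_inf u v)"
  shows "eventually_periodic v"
proof -
  obtain N P where "0 < P" and per: "\<forall>n\<ge>N. append_inf u v (n + P) = append_inf u v n"
    using assms unfolding eventually_periodic_def by blast
  have "v (n + P) = v n" if "N \<le> n" for n
    using per[rule_format, of "n + length u"] that by (simp add: append_inf_def)
  then show ?thesis using \<open>0 < P\<close> unfolding eventually_periodic_def by blast
qed

lemma not_eventually_periodic_frequently:
  fixes z :: "nat \<Rightarrow> bool"
  assumes "\<not> eventually_periodic z"
  shows "\<exists>n\<ge>N. z n"
proof (rule ccontr)
  assume "\<not> (\<exists>n\<ge>N. z n)"
  then have "eventually_periodic z"
    unfolding eventually_periodic_def by (intro exI[of _ N] exI[of _ 1]) auto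
  then show False using assms by simp
qed

lemma exists_not_eventually_periodic: "\<exists>z :: nat \<Rightarrow> bool. \<not> eventually_periodic z"
proof
  define z where "z n \<longleftrightarrow> (\<exists>a. n = 2 ^ a)" for n :: nat
  show "\<not> eventually_periodic z"
  proof
    assume "eventually_periodic z"
    then obtain N P where "0 < P" and per: "\<forall>n\<ge>N. z (n + P) = z n"
      unfolding eventually_periodic_def by blast
    define a where "a = N + P"
    have "a < 2 ^ a" by (rule less_exp)
    then have big: "N \<le> 2 ^ a" "P < 2 ^ a" unfolding a_def by linarith+
    have "z (2 ^ a + P)" using per big by (auto simp: z_def)
    then obtain c where c: "2 ^ a + P = (2::nat) ^ c" by (auto simp: z_def)
    have "(2::nat) ^ a < 2 ^ c" using c \<open>0 < P\<close> by linarith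
    then have "a < c" by simp
    have "(2::nat) ^ c < 2 ^ Suc a" using c big by simp
    then have "c < Suc a" using power_less_imp_less_exp[of "2::nat" c "Suc a"] by simp
    then show False using \<open>a < c\<close> by simp
  qed
qed

lemma eventually_periodic_if_prefixes:
  assumes "u \<noteq> []" and pre: "\<And>j. prefix_inf (a @ concat (replicate j u)) z"
  shows "eventually_periodic z"
  unfolding eventually_periodic_def
proof (intro exI conjI allI impI)
  show "0 < length u" using assms(1) by simp
  fix n assume "length a \<le> n"
  then obtain i where n: "n = length a + i" by (metis le_add_diff_inverse)
  have nth_z: "z (length a + i') = u ! (i' mod length u)" if "i' < Suc (Suc i) * length u" for i'
  proof -
    have "z (length a + i') = (a @ concat (replicate (Suc (Suc i)) u)) ! (length a + i')"
      using pre[of "Suc (Suc i)"] that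
      by (simp add: prefix_inf_def length_concat sum_list_replicate del: replicate.simps)
    also have "\<dots> = u ! (i' mod length u)"
      using that by (simp add: nth_concat_replicate del: replicate.simps)
    finally show ?thesis .
  qed
  have "i + length u < Suc (Suc i) * length u" using assms(1) by (cases u) auto
  then show "z (n + length u) = z n"
    using nth_z[of i] nth_z[of "i + length u"] by (simp add: n add.assoc)
qed

section \<open>Substitution from a given position\<close>

definition sub_word_from :: "nat \<Rightarrow> (nat \<Rightarrow> bool \<Rightarrow> bool list) \<Rightarrow> nat \<Rightarrow> bool list \<Rightarrow> bool list" where
  "sub_word_from k s r u = concat (map (\<lambda>j. s ((j + r) mod k) (u ! j)) [0..<length u])"

lemma sub_word_eq_sub_word_from: "sub_word k s = sub_word_from k s 0"
  by (rule ext) (simp add: sub_word_def sub_word_from_def)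

lemma sub_word_from_Nil [simp]: "sub_word_from k s r [] = []"
  by (simp add: sub_word_from_def)

lemma sub_word_from_snoc:
  "sub_word_from k s r (u @ [c]) = sub_word_from k s r u @ s ((length u + r) mod k) c"
proof -
  have "map (\<lambda>j. s ((j + r) mod k) ((u @ [c]) ! j)) [0..<length u]
      = map (\<lambda>j. s ((j + r) mod k) (u ! j)) [0..<length u]"
    by (simp add: nth_append)
  then show ?thesis by (simp add: sub_word_from_def del: map_eq_conv)
qed

lemma sub_word_from_append:
  "sub_word_from k s r (u @ u') = sub_word_from k s r u @ sub_word_from k s (r + length u) u'"
proof (induction u' rule: rev_induct)
  case (snoc c u')
  then show ?case
    by (simp add: sub_word_from_snoc flip: append_assoc) (simp add: algebra_simps)
qed simp

lemma sub_word_from_mod_cong: "r mod k = r' mod k \<Longrightarrow> sub_word_from k s r = sub_word_from k s r'"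
  unfolding sub_word_from_def by (intro ext) (metis mod_add_right_eq)

lemma prefix_inf_sub_word_from_take:
  "prefix_inf (sub_word_from k s r u) z \<Longrightarrow> prefix_inf (sub_word_from k s r (take n u)) z"
  by (metis append_take_drop_id prefix_inf_appendD sub_word_from_append)

lemma length_sub_word_from_prefix_word_mono:
  "n \<le> m \<Longrightarrow> length (sub_word_from k s r (prefix_word v n)) \<le> length (sub_word_from k s r (prefix_word v m))"
  by (metis append_take_drop_id length_append le_add1 prefix_word_take sub_word_from_append)

text \<open>The second conjunct says that the image of \<open>v\<close> is infinite.\<close>

definition subst_image :: "nat \<Rightarrow> (nat \<Rightarrow> bool \<Rightarrow> bool list) \<Rightarrow> nat \<Rightarrow> (nat \<Rightarrow> bool) \<Rightarrow> (nat \<Rightarrow> bool) \<Rightarrow> bool" where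
  "subst_image k s r v z \<longleftrightarrow> (\<forall>n. prefix_inf (sub_word_from k s r (prefix_word v n)) z) \<and>
      (\<forall>L. \<exists>n. L \<le> length (sub_word_from k s r (prefix_word v n)))"

lemma subst_image_mod_cong: "r mod k = r' mod k \<Longrightarrow> subst_image k s r v z = subst_image k s r' v z"
  unfolding subst_image_def by (drule sub_word_from_mod_cong[where s = s]) simp

lemma subst_image_append_inf:
  assumes "subst_image k s (r + length u) v z"
  shows "subst_image k s r (append_inf u v) (append_inf (sub_word_from k s r u) z)"
  unfolding subst_image_def
proof (intro conjI allI)
  fix n
  show "prefix_inf (sub_word_from k s r (prefix_word (append_inf u v) n)) (append_inf (sub_word_from k s r u) z)"
  proof (cases "n \<le> length u")
    case True
    then show ?thesis
      by (simp add: prefix_word_append_inf prefix_inf_sub_word_from_take prefix_inf_append_inf_self)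
  next
    case False
    then show ?thesis
      using assms by (simp add: prefix_word_append_inf sub_word_from_append prefix_inf_append_inf subst_image_def)
  qed
next
  fix L
  obtain n where "L \<le> length (sub_word_from k s (r + length u) (prefix_word v n))"
    using assms unfolding subst_image_def by blast
  then show "\<exists>n. L \<le> length (sub_word_from k s r (prefix_word (append_inf u v) n))"
    by (intro exI[of _ "n + length u"]) (cases n; simp add: prefix_word_append_inf sub_word_from_append)
qed

lemma sub_word_from_periodic_prefix:
  assumes per: "\<forall>n\<ge>N. v (n + Q) = v n" and "k dvd Q"
  shows "sub_word_from k s r (prefix_word v (N + j * Q)) =
    sub_word_from k s r (prefix_word v N) @
    concat (replicate j (sub_word_from k s (r + N) (prefix_word (\<lambda>i. v (N + i)) Q)))"
proof (induction j)
  case (Suc j)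
  have "N + Suc j * Q = (N + j * Q) + Q" by simp
  then have "prefix_word v (N + Suc j * Q) =
      prefix_word v (N + j * Q) @ prefix_word (\<lambda>i. v (N + j * Q + i)) Q"
    by (simp only: prefix_word_add)
  also have "prefix_word (\<lambda>i. v (N + j * Q + i)) Q = prefix_word (\<lambda>i. v (N + i)) Q"
    using periodic_add_mult[OF per, of "N + _" j] by (intro prefix_word_cong) (simp add: algebra_simps)
  finally have pre: "prefix_word v (N + Suc j * Q) =
      prefix_word v (N + j * Q) @ prefix_word (\<lambda>i. v (N + i)) Q" .
  have "sub_word_from k s (r + (N + j * Q)) = sub_word_from k s (r + N)"
  proof (rule sub_word_from_mod_cong)
    obtain c where "Q = k * c" using \<open>k dvd Q\<close> by blast
    then have "r + (N + j * Q) = (r + N) + (j * c) * k" by (simp add: algebra_simps)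
    then show "(r + (N + j * Q)) mod k = (r + N) mod k" by (simp only: mod_mult_self1)
  qed
  then show ?case
    unfolding pre sub_word_from_append Suc.IH by (simp flip: replicate_append_same)
qed simp

lemma eventually_periodic_subst_image:
  assumes "0 < k" and im: "subst_image k s r v z" and "eventually_periodic v"
  shows "eventually_periodic z"
proof -
  obtain N P where "0 < P" and per: "\<forall>n\<ge>N. v (n + P) = v n"
    using \<open>eventually_periodic v\<close> unfolding eventually_periodic_def by blast
  define Q where "Q = k * P"
  have "0 < Q" using \<open>0 < k\<close> \<open>0 < P\<close> by (simp add: Q_def)
  have perQ: "\<forall>n\<ge>N. v (n + Q) = v n"
    unfolding Q_def using periodic_add_mult[OF per, where m = k] by blast
  define a where "a = sub_word_from k s r (prefix_word v N)"
  define u where "u = sub_word_from k s (r + N) (prefix_word (\<lambda>i. v (N + i)) Q)"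
  have decomp: "sub_word_from k s r (prefix_word v (N + j * Q)) = a @ concat (replicate j u)" for j
    unfolding a_def u_def by (rule sub_word_from_periodic_prefix[OF perQ]) (simp add: Q_def)
  have "u \<noteq> []"
  proof
    assume "u = []"
    obtain n where n: "Suc (length a) \<le> length (sub_word_from k s r (prefix_word v n))"
      using im unfolding subst_image_def by blast
    have "n * 1 \<le> n * Q" using \<open>0 < Q\<close> by (intro mult_le_mono2) simp
    then have "n \<le> N + n * Q" by (metis mult_1_right trans_le_add2)
    then have "length (sub_word_from k s r (prefix_word v n)) \<le>
        length (sub_word_from k s r (prefix_word v (N + n * Q)))"
      by (rule length_sub_word_from_prefix_word_mono)
    also have "\<dots> = length a" using decomp[of n] \<open>u = []\<close> by simp
    finally show False using n by simp
  qed
  moreover have "prefix_inf (a @ concat (replicate j u)) z" for j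
    using im decomp[of j] unfolding subst_image_def by metis
  ultimately show ?thesis by (rule eventually_periodic_if_prefixes)
qed

lemma prefix_word_concat_blocks:
  assumes "\<And>i. length (b i) = k"
  shows "prefix_word (\<lambda>n. b (n div k) ! (n mod k)) (k * m) = concat (map b [0..<m])"
proof (induction m)
  case (Suc m)
  have "prefix_word (\<lambda>n. b (n div k) ! (n mod k)) (k * Suc m) =
      prefix_word (\<lambda>n. b (n div k) ! (n mod k)) (k * m) @ prefix_word (\<lambda>i. b ((k * m + i) div k) ! ((k * m + i) mod k)) k"
    using prefix_word_add[of _ "k * m" k] by (simp add: algebra_simps)
  moreover have "prefix_word (\<lambda>i. b ((k * m + i) div k) ! ((k * m + i) mod k)) k = b m"
    by (rule nth_equalityI) (auto simp: assms)
  ultimately show ?case using Suc by simp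
qed simp

lemma sub_word_from_concat_blocks:
  assumes "\<And>i. length (b i) = k"
  shows "sub_word_from k s 0 (concat (map b [0..<m])) = concat (map (\<lambda>i. sub_word k s (b i)) [0..<m])"
proof (induction m)
  case (Suc m)
  have "length (concat (map b [0..<m])) = k * m"
    by (induction m) (auto simp: assms)
  moreover have "sub_word_from k s (k * m) = sub_word k s"
    by (simp add: sub_word_eq_sub_word_from sub_word_from_mod_cong)
  ultimately show ?case using Suc by (simp add: sub_word_from_append)
qed simp

section \<open>Binary expansions\<close>

definition binval_term :: "(nat \<Rightarrow> bool) \<Rightarrow> nat \<Rightarrow> real" where
  "binval_term w i = (if w i then 1 else 0) / 2 ^ (i + 1)"

lemma binval_term_nonneg: "0 \<le> binval_term w i"
  by (simp add: binval_term_def)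

lemma binval_term_le: "binval_term w i \<le> (1/2) ^ Suc i"
  by (simp add: binval_term_def power_divide)

lemma summable_binval_term: "summable (binval_term w)"
  by (rule summable_comparison_test[OF _ sums_summable[OF power_half_series]])
    (use binval_term_nonneg binval_term_le in auto)

lemma binval_inf_eq_suminf: "binval_inf w = suminf (binval_term w)"
  unfolding binval_inf_def binval_term_def ..

lemma binval_prefix_word: "binval (prefix_word w m) = (\<Sum>i<m. binval_term w i)"
  by (simp add: binval_def binval_term_def)

lemma binval_inf_nonneg: "0 \<le> binval_inf w"
  unfolding binval_inf_eq_suminf by (rule suminf_nonneg[OF summable_binval_term binval_term_nonneg])

lemma binval_inf_le_1: "binval_inf w \<le> 1"
proof -
  have "suminf (binval_term w) \<le> (\<Sum>i. (1/2::real) ^ Suc i)"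
    by (rule suminf_le[OF binval_term_le summable_binval_term sums_summable[OF power_half_series]])
  then show ?thesis using power_half_series sums_unique binval_inf_eq_suminf by metis
qed

lemma binval_inf_pos: "w n \<Longrightarrow> 0 < binval_inf w"
  unfolding binval_inf_eq_suminf
  by (rule suminf_pos2[OF summable_binval_term]) (auto simp: binval_term_nonneg binval_term_def)

lemma binval_inf_split:
  "binval_inf w = binval (prefix_word w m) + binval_inf (\<lambda>n. w (n + m)) / 2 ^ m"
proof -
  have "suminf (binval_term w) = (\<Sum>n. binval_term w (n + m)) + (\<Sum>i<m. binval_term w i)"
    by (rule suminf_split_initial_segment[OF summable_binval_term])
  moreover have "(\<lambda>n. binval_term w (n + m)) = (\<lambda>n. binval_term (\<lambda>n. w (n + m)) n / 2 ^ m)"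
    by (rule ext) (simp add: binval_term_def power_add)
  moreover have "(\<Sum>n. binval_term (\<lambda>n. w (n + m)) n / 2 ^ m) = suminf (binval_term (\<lambda>n. w (n + m))) / 2 ^ m"
    by (rule suminf_divide[OF summable_binval_term])
  ultimately show ?thesis by (simp add: binval_inf_eq_suminf binval_prefix_word)
qed

lemma binval_snoc: "binval (u @ [c]) = binval u + (if c then 1 else 0) / 2 ^ (length u + 1)"
  by (simp add: binval_def nth_append)

lemma binval_le: "binval u \<le> 1 - 1 / 2 ^ length u"
proof (induction u rule: rev_induct)
  case (snoc c u)
  have "binval (u @ [c]) \<le> binval u + 1 / 2 ^ (length u + 1)"
    by (simp add: binval_snoc)
  also have "\<dots> \<le> 1 - 1 / 2 ^ length u + 1 / 2 ^ (length u + 1)" using snoc by simp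
  also have "\<dots> = 1 - 1 / 2 ^ length (u @ [c])" by (simp add: field_simps)
  finally show ?case .
qed (simp add: binval_def)

lemma binval_inf_le_if_not:
  assumes "\<not> w j"
  shows "binval_inf w \<le> 1 - 1 / 2 ^ (j + 1)"
proof -
  have "binval_inf w = binval (prefix_word w (Suc j)) + binval_inf (\<lambda>n. w (n + Suc j)) / 2 ^ Suc j"
    by (rule binval_inf_split)
  also have "\<dots> \<le> binval (prefix_word w j) + 1 / 2 ^ Suc j"
    using assms binval_inf_le_1[of "\<lambda>n. w (n + Suc j)"]
    by (simp add: prefix_word_Suc binval_snoc divide_right_mono)
  also have "\<dots> \<le> 1 - 1 / 2 ^ j + 1 / 2 ^ Suc j" using binval_le[of "prefix_word w j"] by simp
  also have "\<dots> = 1 - 1 / 2 ^ (j + 1)" by (simp add: field_simps)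
  finally show ?thesis .
qed

lemma binval_inf_less:
  assumes agree: "\<And>n. n < i \<Longrightarrow> y n = w n" and "\<not> y i" "w i"
    and frequently: "\<And>N. \<exists>n\<ge>N. w n"
  shows "binval_inf y < binval_inf w"
proof -
  have pre: "prefix_word y i = prefix_word w i" using agree by (rule prefix_word_cong)
  obtain n where "n \<ge> Suc i" "w n" using frequently by blast
  then have pos: "0 < binval_inf (\<lambda>m. w (m + Suc i))"
    by (intro binval_inf_pos[of _ "n - Suc i"]) simp
  have "binval_inf y = binval (prefix_word y (Suc i)) + binval_inf (\<lambda>n. y (n + Suc i)) / 2 ^ Suc i"
    by (rule binval_inf_split)
  also have "\<dots> \<le> binval (prefix_word w i) + 1 / 2 ^ Suc i"
    using \<open>\<not> y i\<close> pre binval_inf_le_1[of "\<lambda>n. y (n + Suc i)"]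
    by (simp add: prefix_word_Suc binval_snoc divide_right_mono)
  also have "\<dots> < binval (prefix_word w i) + 1 / 2 ^ Suc i + binval_inf (\<lambda>m. w (m + Suc i)) / 2 ^ Suc i"
    using pos by simp
  also have "\<dots> = binval_inf w"
    using binval_inf_split[of w "Suc i"] \<open>w i\<close> by (simp add: prefix_word_Suc binval_snoc)
  finally show ?thesis .
qed

lemma binval_inf_inj:
  assumes "\<And>N. \<exists>n\<ge>N. y n" "\<And>N. \<exists>n\<ge>N. w n" and eq: "binval_inf y = binval_inf w"
  shows "y = w"
proof (rule ccontr)
  assume "y \<noteq> w"
  then have ex: "\<exists>i. y i \<noteq> w i" by auto
  define i where "i = (LEAST i. y i \<noteq> w i)"
  have "y i \<noteq> w i" unfolding i_def by (rule LeastI_ex[OF ex])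
  moreover have agree: "y n = w n" if "n < i" for n using not_less_Least that unfolding i_def by blast
  ultimately consider "y i" "\<not> w i" | "\<not> y i" "w i" by blast
  then show False
  proof cases
    case 1
    then have "binval_inf w < binval_inf y" using agree assms(1) by (intro binval_inf_less) auto
    then show False using eq by simp
  next
    case 2
    then have "binval_inf y < binval_inf w" using agree assms(2) by (intro binval_inf_less) auto
    then show False using eq by simp
  qed
qed

lemma tilde_binval_inf:
  assumes "\<And>N. \<exists>n\<ge>N. y n"
  shows "tilde (binval_inf y) = y"
  unfolding tilde_def by (rule the_equality) (use assms binval_inf_inj in auto)

lemma SUP_binval_prefix_word:
  assumes "\<And>L. \<exists>n. L \<le> l n"
  shows "(SUP n. binval (prefix_word y (l n))) = binval_inf y"
proof -
  have le: "(\<Sum>i<m. binval_term y i) \<le> suminf (binval_term y)" for m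
    by (rule sum_le_suminf[OF summable_binval_term]) (auto simp: binval_term_nonneg)
  then have bdd: "bdd_above (range (\<lambda>n. \<Sum>i<l n. binval_term y i))"
    by (intro bdd_aboveI[of _ "suminf (binval_term y)"]) auto
  have "(SUP n. \<Sum>i<l n. binval_term y i) = suminf (binval_term y)"
  proof (rule antisym)
    show "(SUP n. \<Sum>i<l n. binval_term y i) \<le> suminf (binval_term y)"
      by (rule cSUP_least) (use le in auto)
  next
    show "suminf (binval_term y) \<le> (SUP n. \<Sum>i<l n. binval_term y i)"
    proof (rule suminf_le_const[OF summable_binval_term])
      fix m
      obtain n where "m \<le> l n" using assms by blast
      then have "(\<Sum>i<m. binval_term y i) \<le> (\<Sum>i<l n. binval_term y i)"
        by (intro sum_mono2) (auto simp: binval_term_nonneg)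
      also have "\<dots> \<le> (SUP n. \<Sum>i<l n. binval_term y i)" by (rule cSUP_upper[OF _ bdd]) simp
      finally show "(\<Sum>i<m. binval_term y i) \<le> (SUP n. \<Sum>i<l n. binval_term y i)" .
    qed
  qed
  then show ?thesis by (simp add: binval_prefix_word binval_inf_eq_suminf)
qed

lemma binval_inf_gap:
  assumes agree: "\<And>n. n < i \<Longrightarrow> y n = w n" and "\<not> y i" "w i" "i < q" "\<not> y q"
  shows "1 / 2 ^ (q + 1) \<le> binval_inf w - binval_inf y"
proof -
  define a :: real where "a = 2 ^ Suc i"
  define b :: real where "b = 2 ^ (q - Suc i + 1)"
  define V where "V = binval_inf (\<lambda>n. y (n + Suc i))"
  have pre: "prefix_word y i = prefix_word w i" using agree by (rule prefix_word_cong)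
  have "0 < a" "0 < b" by (simp_all add: a_def b_def)
  have "V \<le> 1 - 1 / b"
    using binval_inf_le_if_not[of "\<lambda>n. y (n + Suc i)" "q - Suc i"] assms by (simp add: V_def b_def)
  then have V: "V / a \<le> (1 - 1 / b) / a" using \<open>0 < a\<close> by (simp add: divide_right_mono)
  have y: "binval_inf y = binval (prefix_word w i) + V / a"
    using binval_inf_split[of y "Suc i"] \<open>\<not> y i\<close> pre by (simp add: prefix_word_Suc binval_snoc V_def a_def)
  have w: "binval_inf w \<ge> binval (prefix_word w i) + 1 / a"
    using binval_inf_split[of w "Suc i"] \<open>w i\<close> binval_inf_nonneg[of "\<lambda>n. w (n + Suc i)"]
    by (simp add: prefix_word_Suc binval_snoc a_def)
  have "a * b = 2 ^ (Suc i + (q - Suc i + 1))" by (simp add: a_def b_def power_add)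
  also have "Suc i + (q - Suc i + 1) = q + 1" using \<open>i < q\<close> by simp
  finally have "a * b = 2 ^ (q + 1)" .
  then have "1 / a - (1 - 1 / b) / a = 1 / 2 ^ (q + 1)"
    using \<open>0 < a\<close> \<open>0 < b\<close> by (simp add: field_simps)
  then show ?thesis using y w V by linarith
qed

fun bits :: "nat \<Rightarrow> nat \<Rightarrow> bool list" where
  "bits 0 a = []"
| "bits (Suc m) a = bits m (a div 2) @ [odd a]"

lemma length_bits [simp]: "length (bits m a) = m"
  by (induction m arbitrary: a) auto

lemma binval_bits: "a < 2 ^ m \<Longrightarrow> binval (bits m a) = real a / 2 ^ m"
proof (induction m arbitrary: a)
  case (Suc m)
  have "a = 2 * (a div 2) + a mod 2" by simp
  then have "real a = 2 * real (a div 2) + real (a mod 2)"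
    by (metis of_nat_add of_nat_mult of_nat_numeral)
  also have "real (a mod 2) = (if odd a then 1 else 0)" by (simp add: odd_iff_mod_2_eq_one)
  finally have "real a = 2 * real (a div 2) + (if odd a then 1 else 0)" .
  moreover have "binval (bits m (a div 2)) = real (a div 2) / 2 ^ m"
    using Suc by simp
  ultimately show ?case by (simp add: binval_snoc field_simps)
qed (simp add: binval_def)

lemma dyadic_interval_exists:
  fixes x :: real
  assumes "0 \<le> x" "x \<le> 1"
  shows "\<exists>a<2 ^ m. real a / 2 ^ m \<le> x \<and> x \<le> (real a + 1) / 2 ^ m"
proof (cases "x < 1")
  case True
  define a where "a = nat \<lfloor>x * 2 ^ m\<rfloor>"
  have "real a = \<lfloor>x * 2 ^ m\<rfloor>" using assms by (simp add: a_def)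
  moreover have "x * 2 ^ m < 2 ^ m" using True by simp
  ultimately have "real a \<le> x * 2 ^ m" "x * 2 ^ m < real a + 1" "real a < 2 ^ m" by linarith+
  then show ?thesis by (intro exI[of _ a]) (simp add: field_simps)
next
  case False
  then have "x = 1" using assms by simp
  moreover have "real (2 ^ m - 1 :: nat) = 2 ^ m - 1" by (simp add: of_nat_diff)
  ultimately show ?thesis by (intro exI[of _ "2 ^ m - 1"]) (simp add: field_simps)
qed

lemma binval_inf_bits_bounds:
  assumes "a < 2 ^ m" "prefix_inf (bits m a) y"
  shows "real a / 2 ^ m \<le> binval_inf y" "binval_inf y \<le> (real a + 1) / 2 ^ m"
proof -
  have "prefix_word y m = bits m a" using assms(2) by (simp add: prefix_inf_iff_prefix_word)
  then have y: "binval_inf y = real a / 2 ^ m + binval_inf (\<lambda>n. y (n + m)) / 2 ^ m"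
    using binval_inf_split[of y m] binval_bits[OF assms(1)] by simp
  show "real a / 2 ^ m \<le> binval_inf y" using y binval_inf_nonneg by simp
  show "binval_inf y \<le> (real a + 1) / 2 ^ m"
    using y binval_inf_le_1[of "\<lambda>n. y (n + m)"] by (simp add: add_divide_distrib divide_right_mono)
qed

lemma open_contains_cylinder:
  assumes "open U" "x \<in> U" "0 \<le> x" "x \<le> 1"
  shows "\<exists>p. \<forall>y. prefix_inf p y \<longrightarrow> binval_inf y \<in> U"
proof -
  obtain e where "e > 0" and e: "ball x e \<subseteq> U" using assms open_contains_ball by blast
  obtain m where m: "(1/2::real) ^ m < e" using real_arch_pow_inv[OF \<open>e > 0\<close>, of "1/2"] by auto
  obtain a where a: "a < 2 ^ m" "real a / 2 ^ m \<le> x" "x \<le> (real a + 1) / 2 ^ m"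
    using dyadic_interval_exists assms(3,4) by blast
  have "binval_inf y \<in> U" if "prefix_inf (bits m a) y" for y
  proof -
    have "\<bar>binval_inf y - x\<bar> \<le> 1 / 2 ^ m"
      using binval_inf_bits_bounds[OF a(1) that] a(2,3) by (simp add: abs_le_iff add_divide_distrib)
    then show ?thesis using m e by (simp add: dist_real_def abs_minus_commute power_divide subset_iff)
  qed
  then show ?thesis by blast
qed

lemma list_first_difference:
  assumes "length xs = length ys" "xs \<noteq> ys"
  shows "\<exists>i<length xs. take i xs = take i ys \<and> xs ! i \<noteq> ys ! i"
proof -
  have ex: "\<exists>i. i < length xs \<and> xs ! i \<noteq> ys ! i" using assms list_eq_iff_nth_eq by blast
  define i where "i = (LEAST i. i < length xs \<and> xs ! i \<noteq> ys ! i)"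
  have i: "i < length xs \<and> xs ! i \<noteq> ys ! i" unfolding i_def by (rule LeastI_ex[OF ex])
  have "\<forall>n<i. xs ! n = ys ! n"
    using not_less_Least[where P = "\<lambda>i. i < length xs \<and> xs ! i \<noteq> ys ! i"] i
    unfolding i_def[symmetric] by (metis i_def less_trans)
  then have "take i xs = take i ys" using i assms by (intro nth_take_lemma) auto
  then show ?thesis using i by blast
qed

lemma binval_inf_code_gap:
  assumes "length b = q" "length b' = q" "b \<noteq> b'"
    and w: "prefix_inf (b @ [False]) w" and w': "prefix_inf (b' @ [False]) w'"
  shows "1 / 2 ^ (q + 1) \<le> \<bar>binval_inf w - binval_inf w'\<bar>"
proof -
  obtain i where i: "i < q" "take i b = take i b'" "b ! i \<noteq> b' ! i"
    using list_first_difference[of b b'] assms(1-3) by auto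
  have wn: "w n = b ! n" "w' n = b' ! n" if "n < q" for n
    using w w' that assms(1,2) unfolding prefix_inf_def by (auto simp: nth_append)
  have agree: "w n = w' n" if "n < i" for n
    using wn[of n] that i by (metis nth_take order.strict_trans)
  have "\<not> w q" "\<not> w' q" using w w' assms(1,2) unfolding prefix_inf_def by (auto simp: nth_append)
  then consider "w i" "\<not> w' i" | "\<not> w i" "w' i" using i wn by auto
  then show ?thesis
  proof cases
    case 1
    then show ?thesis using binval_inf_gap[of i w' w q] agree i \<open>\<not> w' q\<close> by fastforce
  next
    case 2
    then show ?thesis using binval_inf_gap[of i w w' q] agree i \<open>\<not> w q\<close> by fastforce
  qed
qed

section \<open>Separated sets and infinite entropy\<close>

lemma card_le_sep_card:
  assumes "finite C" "X ` C \<subseteq> K" "0 < \<delta>"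
    and sep: "\<And>c c'. c \<in> C \<Longrightarrow> c' \<in> C \<Longrightarrow> c \<noteq> c' \<Longrightarrow>
      \<exists>t\<le>n. \<delta> \<le> \<bar>(f ^^ t) (X c) - (f ^^ t) (X c')\<bar>"
  shows "ereal (real (card C)) \<le> sep_card f K n \<delta>"
proof -
  have "inj_on X C"
  proof (rule inj_onI, rule ccontr)
    fix c c' assume "c \<in> C" "c' \<in> C" "X c = X c'" "c \<noteq> c'"
    then show False using sep[of c c'] \<open>0 < \<delta>\<close> by auto
  qed
  then have card: "card (X ` C) = card C" by (rule card_image)
  have "separated f n \<delta> (X ` C)"
    unfolding separated_def
  proof (intro ballI impI)
    fix x y assume "x \<in> X ` C" "y \<in> X ` C" "x \<noteq> y"
    then obtain c c' where "c \<in> C" "c' \<in> C" "c \<noteq> c'" "x = X c" "y = X c'" by auto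
    then obtain t where "t \<le> n" "\<delta> \<le> \<bar>(f ^^ t) x - (f ^^ t) y\<bar>" using sep by blast
    moreover have "\<bar>(f ^^ t) x - (f ^^ t) y\<bar> \<le> dist_n f n x y"
      unfolding dist_n_def by (rule Max_ge) (use \<open>t \<le> n\<close> in auto)
    ultimately show "\<delta> \<le> dist_n f n x y" by linarith
  qed
  then have "ereal (real (card (X ` C))) \<le> sep_card f K n \<delta>"
    unfolding sep_card_def using assms(1,2) by (intro SUP_upper) auto
  then show ?thesis by (simp add: card)
qed

lemma ereal_le_elog_div:
  assumes "ereal (exp (A * real n)) \<le> t" "0 < n"
  shows "ereal A \<le> elog t / ereal (real n)"
proof (cases t)
  case (real r)
  then have "exp (A * real n) \<le> r" using assms(1) by simp
  moreover from this have "0 < r" using exp_gt_zero less_le_trans by blast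
  ultimately have "A * real n \<le> ln r" by (simp add: ln_ge_iff)
  then show ?thesis using real assms(2) by (simp add: elog_def field_simps)
qed (use assms in \<open>simp_all add: elog_def\<close>)

lemma entropy_on_infinite:
  assumes "\<And>A. 0 < A \<Longrightarrow> \<exists>\<delta>0>0. \<forall>\<delta>. 0 < \<delta> \<and> \<delta> \<le> \<delta>0 \<longrightarrow>
      (\<forall>\<^sub>F n in sequentially. ereal (exp (A * real n)) \<le> sep_card f K n \<delta>)"
  shows "entropy_on f K = \<infinity>"
proof -
  define g where "g \<delta> = limsup (\<lambda>n. elog (sep_card f K n \<delta>) / ereal (real n))" for \<delta>
  have "\<forall>\<^sub>F \<delta> in at_right 0. ereal r < g \<delta>" for r
  proof -
    define A where "A = max r 0 + 1"
    have "0 < A" by (simp add: A_def)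
    from assms[OF this] obtain \<delta>0 where "0 < \<delta>0" and \<delta>0: "\<forall>\<delta>. 0 < \<delta> \<and> \<delta> \<le> \<delta>0 \<longrightarrow>
        (\<forall>\<^sub>F n in sequentially. ereal (exp (A * real n)) \<le> sep_card f K n \<delta>)"
      by blast
    have A_le_g: "ereal A \<le> g \<delta>" if "0 < \<delta>" "\<delta> \<le> \<delta>0" for \<delta>
    proof -
      have "\<forall>\<^sub>F n in sequentially. ereal (exp (A * real n)) \<le> sep_card f K n \<delta>"
        using \<delta>0 that by blast
      then have "\<forall>\<^sub>F n in sequentially. ereal A \<le> elog (sep_card f K n \<delta>) / ereal (real n)"
        using eventually_gt_at_top[of 0] by eventually_elim (rule ereal_le_elog_div)
      then have "ereal A \<le> liminf (\<lambda>n. elog (sep_card f K n \<delta>) / ereal (real n))"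
        by (rule Liminf_bounded)
      then show ?thesis unfolding g_def using Liminf_le_Limsup[of sequentially] order_trans by fastforce
    qed
    show ?thesis
      unfolding eventually_at_right_field
    proof (intro exI[of _ \<delta>0] conjI allI impI)
      fix \<delta> :: real assume "0 < \<delta>" "\<delta> < \<delta>0"
      then have "ereal A \<le> g \<delta>" using A_le_g by simp
      moreover have "ereal r < ereal A" by (simp add: A_def)
      ultimately show "ereal r < g \<delta>" by (rule less_le_trans[rotated])
    qed (rule \<open>0 < \<delta>0\<close>)
  qed
  then have "(g \<longlongrightarrow> \<infinity>) (at_right 0)" by (simp add: tendsto_PInfty)
  then show ?thesis unfolding entropy_on_def g_def by (simp add: tendsto_Lim)
qed

lemma exists_mult_between:
  fixes a T n :: nat
  assumes "0 < T" "2 * (a + T) \<le> n"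
  shows "\<exists>j. a + j * T \<le> n \<and> n \<le> 2 * (j * T)"
proof (intro exI conjI)
  define j where "j = (n - a) div T"
  have "j * T + (n - a) mod T = n - a" unfolding j_def by (rule div_mult_mod_eq)
  moreover have "(n - a) mod T < T" using assms(1) by simp
  ultimately have "j * T \<le> n - a" "n - a < j * T + T" by linarith+
  then show "a + j * T \<le> n" using assms(2) by arith
  show "n \<le> 2 * (j * T)" using \<open>n - a < j * T + T\<close> assms(2) by arith
qed

lemma van_order_code_bound:
  assumes hyp: "\<forall>M>0. \<exists>N. \<forall>w. length w > N \<longrightarrow> real (length w) / real (van_order k s w) > M"
    and "0 < M"
  shows "\<exists>q T. M \<le> real q \<and> 0 < T \<and> real T * M \<le> 4 * real q \<and>
    (\<forall>b. length b = q \<longrightarrow> van_order k s (b @ [False]) \<le> T)"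
proof -
  obtain N where N: "\<forall>w. length w > N \<longrightarrow> real (length w) / real (van_order k s w) > M"
    using hyp \<open>0 < M\<close> by blast
  define q where "q = N + 1 + nat \<lceil>M\<rceil>"
  define T where "T = nat \<lceil>(real q + 1) / M\<rceil>"
  have "1 \<le> q" "M \<le> real q" unfolding q_def by linarith+
  have "0 < T" using \<open>0 < M\<close> by (simp add: T_def)
  have "real T = of_int \<lceil>(real q + 1) / M\<rceil>" using \<open>0 < M\<close> by (simp add: T_def)
  then have T_le: "real T \<le> (real q + 1) / M + 1" by linarith
  have "real T * M \<le> ((real q + 1) / M + 1) * M" using T_le \<open>0 < M\<close> by (intro mult_right_mono) auto
  also have "\<dots> = real q + 1 + M" using \<open>0 < M\<close> by (simp add: field_simps)
  also have "\<dots> \<le> 4 * real q" using \<open>1 \<le> q\<close> \<open>M \<le> real q\<close> by simp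
  finally have "real T * M \<le> 4 * real q" .
  moreover have "van_order k s (b @ [False]) \<le> T" if "length b = q" for b
  proof -
    define e where "e = van_order k s (b @ [False])"
    have "M < real (q + 1) / real e"
      using N[rule_format, of "b @ [False]"] that unfolding e_def q_def by simp
    moreover from this have "0 < e" using \<open>0 < M\<close> by (cases "e = 0") auto
    ultimately have "M * real e < real q + 1" by (simp add: field_simps)
    then have "real e < (real q + 1) / M" using \<open>0 < M\<close> by (simp add: field_simps)
    then show ?thesis unfolding e_def T_def by linarith
  qed
  ultimately show ?thesis using \<open>M \<le> real q\<close> \<open>0 < T\<close> by blast
qed

section \<open>Orbits of \<open>f_sigma\<close>\<close>

locale optimal_erasing =
  fixes k :: nat and s :: "nat \<Rightarrow> bool \<Rightarrow> bool list"
  assumes k_pos: "0 < k"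
    and compl_erasing: "completely_erasing k s"
    and optimality: "optimal k s"
begin

lemma length_w_eps: "length (w_eps k s) = k"
  and sub_word_w_eps: "sub_word k s (w_eps k s) = []"
proof -
  have "\<exists>!b. b \<in> blocks k \<and> sub_word k s b = []"
    using compl_erasing unfolding completely_erasing_def erasing_def by blast
  then have "w_eps k s \<in> blocks k \<and> sub_word k s (w_eps k s) = []"
    unfolding w_eps_def by (rule theI')
  then show "length (w_eps k s) = k" "sub_word k s (w_eps k s) = []" by (auto simp: blocks_def)
qed

lemma sub_word_from_drop_w_eps: "sub_word_from k s r (drop (r mod k) (w_eps k s)) = []"
proof -
  have "s ((j + r) mod k) (drop (r mod k) (w_eps k s) ! j) = []" if "j < k - r mod k" for j
  proof -
    have "(j + r) mod k = (j + r mod k) mod k" by (simp add: mod_add_right_eq)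
    also have "\<dots> = r mod k + j" using that by simp
    finally have "(j + r) mod k = r mod k + j" .
    moreover have "r mod k + j < k" using that by simp
    ultimately show ?thesis
      using sub_word_w_eps length_w_eps by (auto simp: sub_word_def add.commute)
  qed
  then show ?thesis using length_w_eps by (simp add: sub_word_from_def)
qed

lemma exists_subst_image: "\<exists>v. subst_image k s 0 v z"
proof -
  obtain b where b: "\<forall>i. b i \<in> blocks k \<and> sub_word k s (b i) \<noteq> []"
    and pre: "\<forall>m. let u = concat (map (\<lambda>i. sub_word k s (b i)) [0..<m]) in prefix_word z (length u) = u"
    using optimality unfolding optimal_def by blast
  have len: "length (b i) = k" for i using b by (simp add: blocks_def)
  define v where "v n = b (n div k) ! (n mod k)" for n
  define img where "img m = concat (map (\<lambda>i. sub_word k s (b i)) [0..<m])" for m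
  have img: "sub_word_from k s 0 (prefix_word v (k * m)) = img m" for m
    unfolding v_def img_def by (simp add: prefix_word_concat_blocks sub_word_from_concat_blocks len)
  have "m \<le> length (img m)" for m
  proof (induction m)
    case (Suc m)
    have "sub_word k s (b m) \<noteq> []" using b by blast
    then have "1 \<le> length (sub_word k s (b m))" by (simp add: Suc_le_eq)
    then show ?case using Suc by (simp add: img_def)
  qed simp
  then have "\<exists>n. L \<le> length (sub_word_from k s 0 (prefix_word v n))" for L
    using img by metis
  moreover have "prefix_inf (sub_word_from k s 0 (prefix_word v n)) z" for n
  proof -
    have "prefix_inf (img n) z" using pre by (simp add: img_def prefix_inf_iff_prefix_word Let_def)
    then have "prefix_inf (sub_word_from k s 0 (take n (prefix_word v (k * n)))) z"
      using prefix_inf_sub_word_from_take[of k s 0 "prefix_word v (k * n)" z n] img[of n] by simp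
    then show ?thesis using k_pos by (simp flip: prefix_word_take)
  qed
  ultimately have "subst_image k s 0 v z" unfolding subst_image_def by blast
  then show ?thesis by blast
qed

text \<open>Prepending the tail of \<open>w_eps\<close> that completes the current block adjusts the phase without
  changing the image.\<close>

lemma exists_aperiodic_preimage:
  assumes "\<not> eventually_periodic z"
  shows "\<exists>v. \<not> eventually_periodic v \<and> subst_image k s r v z"
proof -
  obtain v where v: "subst_image k s 0 v z" using exists_subst_image by blast
  define d where "d = drop (r mod k) (w_eps k s)"
  have "length d = k - r mod k" "r mod k < k" "k * (r div k) + r mod k = r"
    using length_w_eps k_pos by (simp_all add: d_def)
  then have "r + length d = k * (r div k) + k" by arith
  then have "r + length d = k * (r div k + 1)" by simp
  then have "(r + length d) mod k = 0 mod k" by simp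
  then have "subst_image k s (r + length d) v z" by (rule subst_image_mod_cong[THEN iffD2, OF _ v])
  then have "subst_image k s r (append_inf d v) (append_inf (sub_word_from k s r d) z)"
    by (rule subst_image_append_inf)
  then have "subst_image k s r (append_inf d v) z" by (simp add: d_def sub_word_from_drop_w_eps)
  moreover have "\<not> eventually_periodic (append_inf d v)"
    using assms eventually_periodic_subst_image[OF k_pos v] eventually_periodic_append_infD by blast
  ultimately show ?thesis by blast
qed

lemma f_sigma_binval_inf:
  assumes im: "subst_image k s 0 y y'" and "\<not> eventually_periodic y"
  shows "f_sigma k s (binval_inf y) = binval_inf y'"
proof -
  have freq: "\<exists>n\<ge>N. y n" for N using assms(2) by (rule not_eventually_periodic_frequently)
  then have "0 < binval_inf y" using binval_inf_pos by blast
  moreover have "y \<noteq> (\<lambda>n. w_eps k s ! (n mod k))"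
  proof
    assume "y = (\<lambda>n. w_eps k s ! (n mod k))"
    then have "eventually_periodic y"
      unfolding eventually_periodic_def using k_pos by (intro exI[of _ 0] exI[of _ k]) auto
    then show False using assms(2) by simp
  qed
  ultimately have f: "f_sigma k s (binval_inf y) = (SUP n. binval (sub_word k s (prefix_word y n)))"
    using binval_inf_le_1[of y] tilde_binval_inf[OF freq] by (simp add: f_sigma_def sub_inf_val_def)
  define l where "l n = length (sub_word_from k s 0 (prefix_word y n))" for n
  have "sub_word k s (prefix_word y n) = prefix_word y' (l n)" for n
    using im unfolding subst_image_def l_def by (simp add: prefix_inf_iff_prefix_word sub_word_eq_sub_word_from)
  moreover have "\<exists>n. L \<le> l n" for L using im unfolding subst_image_def l_def by blast
  then have "(SUP n. binval (prefix_word y' (l n))) = binval_inf y'" by (rule SUP_binval_prefix_word)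
  ultimately show ?thesis using f by simp
qed

lemma f_sigma_iterate_append_inf:
  assumes "\<not> eventually_periodic z"
  shows "\<exists>v. \<not> eventually_periodic v \<and>
    (f_sigma k s ^^ m) (binval_inf (append_inf u v)) = binval_inf (append_inf ((sub_word k s ^^ m) u) z)"
proof (induction m arbitrary: u)
  case (Suc m)
  obtain v' where v': "\<not> eventually_periodic v'"
    and iter: "(f_sigma k s ^^ m) (binval_inf (append_inf (sub_word k s u) v'))
             = binval_inf (append_inf ((sub_word k s ^^ m) (sub_word k s u)) z)"
    using Suc by blast
  obtain v where v: "\<not> eventually_periodic v" and im: "subst_image k s (0 + length u) v v'"
    using exists_aperiodic_preimage[OF v'] by auto
  have "subst_image k s 0 (append_inf u v) (append_inf (sub_word k s u) v')"
    using subst_image_append_inf[OF im] by (simp add: sub_word_eq_sub_word_from)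
  moreover have "\<not> eventually_periodic (append_inf u v)"
    using v eventually_periodic_append_infD by blast
  ultimately have "f_sigma k s (binval_inf (append_inf u v)) = binval_inf (append_inf (sub_word k s u) v')"
    by (rule f_sigma_binval_inf)
  then have "(f_sigma k s ^^ Suc m) (binval_inf (append_inf u v)) =
      binval_inf (append_inf ((sub_word k s ^^ Suc m) u) z)"
    using iter by (simp add: funpow_Suc_right del: funpow.simps)
  then show ?case using v by blast
qed (use assms in auto)

lemma sub_word_van_order: "(sub_word k s ^^ van_order k s u) u = []"
proof -
  have "\<exists>n. (sub_word k s ^^ n) u = []" using compl_erasing unfolding completely_erasing_def by blast
  then show ?thesis unfolding van_order_def by (rule LeastI_ex)
qed

lemma f_sigma_van_order_append_inf:
  assumes "\<not> eventually_periodic z"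
  shows "\<exists>v. \<not> eventually_periodic v \<and>
    (f_sigma k s ^^ van_order k s u) (binval_inf (append_inf u v)) = binval_inf z"
  using f_sigma_iterate_append_inf[OF assms, of "van_order k s u" u] sub_word_van_order by simp

text \<open>From time \<open>t0\<close> on, the orbit of \<open>x\<close> reads the codes \<open>b @ [False]\<close>, \<open>b \<in> set cs\<close>, one
  after the other; reading a code lasts until it has been erased, i.e. for its \<open>van_order\<close>.\<close>

definition code_time :: "bool list list \<Rightarrow> nat" where
  "code_time cs = sum_list (map (\<lambda>b. van_order k s (b @ [False])) cs)"

definition follows_codes :: "nat \<Rightarrow> bool list list \<Rightarrow> real \<Rightarrow> bool" where
  "follows_codes t0 cs x \<longleftrightarrow> (\<forall>i<length cs. \<exists>w.
     (f_sigma k s ^^ (code_time (take i cs) + t0)) x = binval_inf w \<and> prefix_inf (cs ! i @ [False]) w)"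

lemma code_time_le: "(\<And>b. b \<in> set cs \<Longrightarrow> van_order k s (b @ [False]) \<le> T) \<Longrightarrow> code_time cs \<le> length cs * T"
  by (induction cs) (auto simp: code_time_def add_mono)

lemma orbit_through_codes:
  assumes "\<not> eventually_periodic z"
  shows "\<exists>y. \<not> eventually_periodic y \<and> (f_sigma k s ^^ code_time cs) (binval_inf y) = binval_inf z \<and>
    follows_codes 0 cs (binval_inf y)"
proof (induction cs)
  case Nil
  show ?case using assms by (intro exI[of _ z]) (simp add: code_time_def follows_codes_def)
next
  case (Cons b cs)
  obtain y' where y': "\<not> eventually_periodic y'"
    and last: "(f_sigma k s ^^ code_time cs) (binval_inf y') = binval_inf z"
    and codes: "follows_codes 0 cs (binval_inf y')"
    using Cons by blast
  obtain v where v: "\<not> eventually_periodic v"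
    and first: "(f_sigma k s ^^ van_order k s (b @ [False])) (binval_inf (append_inf (b @ [False]) v)) = binval_inf y'"
    using f_sigma_van_order_append_inf[OF y'] by blast
  define y where "y = append_inf (b @ [False]) v"
  have shift: "(f_sigma k s ^^ code_time (b # cs')) (binval_inf y) = (f_sigma k s ^^ code_time cs') (binval_inf y')" for cs'
  proof -
    have "code_time (b # cs') = code_time cs' + van_order k s (b @ [False])"
      by (simp add: code_time_def)
    then show ?thesis using first by (simp add: funpow_add y_def)
  qed
  have codes_y: "follows_codes 0 (b # cs) (binval_inf y)"
    unfolding follows_codes_def
  proof (intro allI impI)
    fix i assume i: "i < length (b # cs)"
    show "\<exists>w. (f_sigma k s ^^ (code_time (take i (b # cs)) + 0)) (binval_inf y) = binval_inf w \<and>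
      prefix_inf ((b # cs) ! i @ [False]) w"
    proof (cases i)
      case 0
      then show ?thesis by (intro exI[of _ y]) (simp add: code_time_def y_def prefix_inf_append_inf_self)
    next
      case (Suc i')
      then obtain w where "(f_sigma k s ^^ code_time (take i' cs)) (binval_inf y') = binval_inf w"
        "prefix_inf (cs ! i' @ [False]) w" using codes i by (auto simp: follows_codes_def)
      then show ?thesis using shift[of "take i' cs"] Suc by auto
    qed
  qed
  show ?case
  proof (intro exI[of _ y] conjI)
    show "\<not> eventually_periodic y"
      unfolding y_def using v by (blast dest: eventually_periodic_append_infD)
    show "(f_sigma k s ^^ code_time (b # cs)) (binval_inf y) = binval_inf z"
      using shift[of cs] last by simp
  qed (rule codes_y)
qed

lemma exists_point_following_codes:
  assumes cyl: "\<forall>y. prefix_inf p y \<longrightarrow> binval_inf y \<in> K"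
  shows "\<exists>x\<in>K. follows_codes (van_order k s p) cs x"
proof -
  obtain z :: "nat \<Rightarrow> bool" where "\<not> eventually_periodic z" using exists_not_eventually_periodic by blast
  then obtain y where "\<not> eventually_periodic y" and codes: "follows_codes 0 cs (binval_inf y)"
    using orbit_through_codes by blast
  then obtain v where v: "(f_sigma k s ^^ van_order k s p) (binval_inf (append_inf p v)) = binval_inf y"
    using f_sigma_van_order_append_inf by blast
  have "binval_inf (append_inf p v) \<in> K" using cyl prefix_inf_append_inf_self by blast
  moreover have "follows_codes (van_order k s p) cs (binval_inf (append_inf p v))"
    using codes v by (simp add: follows_codes_def funpow_add)
  ultimately show ?thesis by blast
qed

lemma follows_codes_separated:
  assumes "set cs \<subseteq> {b. length b = q}" "set cs' \<subseteq> {b. length b = q}" "length cs = length cs'" "cs \<noteq> cs'"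
    and T: "\<And>b. b \<in> set cs \<Longrightarrow> van_order k s (b @ [False]) \<le> T"
    and x: "follows_codes t0 cs x" and x': "follows_codes t0 cs' x'"
  shows "\<exists>t\<le>length cs * T + t0. 1 / 2 ^ (q + 1) \<le> \<bar>(f_sigma k s ^^ t) x - (f_sigma k s ^^ t) x'\<bar>"
proof -
  obtain i where i: "i < length cs" "take i cs = take i cs'" "cs ! i \<noteq> cs' ! i"
    using list_first_difference[OF assms(3,4)] by blast
  define t where "t = code_time (take i cs) + t0"
  have "cs ! i \<in> set cs" "cs' ! i \<in> set cs'" using i assms(3) by simp_all
  then have len: "length (cs ! i) = q" "length (cs' ! i) = q" using assms(1,2) by auto
  obtain w where w: "(f_sigma k s ^^ t) x = binval_inf w" "prefix_inf (cs ! i @ [False]) w"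
    using x i(1) unfolding follows_codes_def t_def by blast
  obtain w' where w': "(f_sigma k s ^^ t) x' = binval_inf w'" "prefix_inf (cs' ! i @ [False]) w'"
    using x' i(1) assms(3) unfolding follows_codes_def t_def i(2) by auto
  have "code_time (take i cs) \<le> length (take i cs) * T"
    using T by (intro code_time_le) (auto dest: in_set_takeD)
  moreover have "i * T \<le> length cs * T" using i by (intro mult_le_mono1) simp
  ultimately have "t \<le> length cs * T + t0" using i unfolding t_def length_take by linarith
  moreover have "1 / 2 ^ (q + 1) \<le> \<bar>(f_sigma k s ^^ t) x - (f_sigma k s ^^ t) x'\<bar>"
    using binval_inf_code_gap[OF len i(3) w(2) w'(2)] w(1) w'(1) by simp
  ultimately show ?thesis by blast
qed

lemma sep_card_codes:
  assumes cyl: "\<forall>y. prefix_inf p y \<longrightarrow> binval_inf y \<in> K"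
    and T: "\<And>b. length b = q \<Longrightarrow> van_order k s (b @ [False]) \<le> T"
    and n: "j * T + van_order k s p \<le> n" and "0 < \<delta>" "\<delta> \<le> 1 / 2 ^ (q + 1)"
  shows "ereal (2 ^ (q * j)) \<le> sep_card (f_sigma k s) K n \<delta>"
proof -
  define X where "X cs = (SOME x. x \<in> K \<and> follows_codes (van_order k s p) cs x)" for cs
  have "\<exists>x. x \<in> K \<and> follows_codes (van_order k s p) cs x" for cs
    using exists_point_following_codes[OF cyl] by blast
  then have X: "X cs \<in> K \<and> follows_codes (van_order k s p) cs (X cs)" for cs
    unfolding X_def by (rule someI_ex)
  define C :: "bool list list set" where "C = {cs. set cs \<subseteq> {b. length b = q} \<and> length cs = j}"
  have fin: "finite {b :: bool list. length b = q}"
    using finite_lists_length_eq[of "UNIV :: bool set" q] by simp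
  have "card {b :: bool list. length b = q} = 2 ^ q"
    using card_lists_length_eq[of "UNIV :: bool set" q] by simp
  then have "card C = 2 ^ (q * j)"
    unfolding C_def by (simp only: card_lists_length_eq[OF fin] power_mult)
  moreover have "ereal (real (card C)) \<le> sep_card (f_sigma k s) K n \<delta>"
  proof (rule card_le_sep_card)
    show "finite C" unfolding C_def by (rule finite_lists_length_eq[OF fin])
    show "X ` C \<subseteq> K" using X by blast
    fix cs cs' assume "cs \<in> C" "cs' \<in> C" "cs \<noteq> cs'"
    then have cs: "set cs \<subseteq> {b. length b = q}" "set cs' \<subseteq> {b. length b = q}"
      "length cs = length cs'" "length cs = j" by (simp_all add: C_def)
    have "\<And>b. b \<in> set cs \<Longrightarrow> van_order k s (b @ [False]) \<le> T" using cs(1) T by blast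
    from follows_codes_separated[OF cs(1-3) \<open>cs \<noteq> cs'\<close> this, of _ "X cs" "X cs'"] X cs(4)
    obtain t where "t \<le> j * T + van_order k s p"
      and "1 / 2 ^ (q + 1) \<le> \<bar>(f_sigma k s ^^ t) (X cs) - (f_sigma k s ^^ t) (X cs')\<bar>"
      by blast
    then show "\<exists>t\<le>n. \<delta> \<le> \<bar>(f_sigma k s ^^ t) (X cs) - (f_sigma k s ^^ t) (X cs')\<bar>"
      using \<open>\<delta> \<le> 1 / 2 ^ (q + 1)\<close> n by (intro exI[of _ t]) simp
  qed (rule \<open>0 < \<delta>\<close>)
  ultimately show ?thesis by simp
qed

lemma sep_card_exponential:
  assumes hyp: "\<forall>M>0. \<exists>N. \<forall>w. length w > N \<longrightarrow> real (length w) / real (van_order k s w) > M"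
    and cyl: "\<forall>y. prefix_inf p y \<longrightarrow> binval_inf y \<in> K" and "0 < A"
  shows "\<exists>\<delta>0>0. \<forall>\<delta>. 0 < \<delta> \<and> \<delta> \<le> \<delta>0 \<longrightarrow>
    (\<forall>\<^sub>F n in sequentially. ereal (exp (A * real n)) \<le> sep_card (f_sigma k s) K n \<delta>)"
proof -
  define M where "M = 8 * A / ln 2"
  have "0 < M" using \<open>0 < A\<close> by (simp add: M_def)
  then obtain q T where "0 < T" and TM: "real T * M \<le> 4 * real q"
    and T: "\<forall>b. length b = q \<longrightarrow> van_order k s (b @ [False]) \<le> T"
    using van_order_code_bound[OF hyp] by blast
  have "\<forall>\<^sub>F n in sequentially. ereal (exp (A * real n)) \<le> sep_card (f_sigma k s) K n \<delta>"
    if "0 < \<delta>" "\<delta> \<le> 1 / 2 ^ (q + 1)" for \<delta>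
    unfolding eventually_sequentially
  proof (intro exI allI impI)
    fix n assume "2 * (van_order k s p + T) \<le> n"
    then obtain j where j: "van_order k s p + j * T \<le> n" "n \<le> 2 * (j * T)"
      using exists_mult_between[OF \<open>0 < T\<close>] by blast
    have "A * real n \<le> A * (2 * (real j * real T))"
      using j(2) \<open>0 < A\<close> by (intro mult_left_mono) (simp_all flip: of_nat_mult of_nat_le_iff)
    also have "\<dots> = real j * (real T * M) * ln 2 / 4" by (simp add: M_def)
    also have "\<dots> \<le> real j * (4 * real q) * ln 2 / 4"
      using TM by (intro divide_right_mono mult_right_mono mult_left_mono) simp_all
    finally have "exp (A * real n) \<le> exp (real (q * j) * ln 2)" by (simp add: algebra_simps)
    also have "\<dots> = exp (ln 2) ^ (q * j)" by (rule exp_of_nat_mult)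
    also have "\<dots> = 2 ^ (q * j)" by simp
    finally have "ereal (exp (A * real n)) \<le> ereal (2 ^ (q * j))" by simp
    also have "\<dots> \<le> sep_card (f_sigma k s) K n \<delta>"
      using T j(1) that by (intro sep_card_codes[OF cyl]) (auto simp: add.commute)
    finally show "ereal (exp (A * real n)) \<le> sep_card (f_sigma k s) K n \<delta>" .
  qed
  then show ?thesis by (intro exI[of _ "1 / 2 ^ (q + 1)"]) auto
qed

lemma entropy_on_cylinder:
  assumes "\<forall>M>0. \<exists>N. \<forall>w. length w > N \<longrightarrow> real (length w) / real (van_order k s w) > M"
    and "\<forall>y. prefix_inf p y \<longrightarrow> binval_inf y \<in> K"
  shows "entropy_on (f_sigma k s) K = \<infinity>"
  using sep_card_exponential[OF assms] by (rule entropy_on_infinite)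

end

theorem mainTheorem19:
  fixes k :: nat and s :: "nat \<Rightarrow> bool \<Rightarrow> bool list"
  assumes "k \<ge> 2"
    and "completely_erasing k s"
    and "w_eps k s \<noteq> replicate k True"
    and "optimal k s"
    and "\<forall>M>0. \<exists>N. \<forall>w. length w > N \<longrightarrow>
            real (length w) / real (van_order k s w) > M"
  shows "\<forall>x\<in>{0..1::real}. \<forall>K. (K \<subseteq> {0..1} \<and> closed K \<and>
            (\<exists>U. open U \<and> x \<in> U \<and> U \<inter> {0..1} \<subseteq> K)) \<longrightarrow>
           entropy_on (f_sigma k s) K = entropy (f_sigma k s) \<and>
           entropy (f_sigma k s) = \<infinity>"
proof (intro ballI allI impI)
  interpret optimal_erasing k s
    using assms by unfold_locales simp_all
  fix x :: real and K :: "real set"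
  assume "x \<in> {0..1}" and "K \<subseteq> {0..1} \<and> closed K \<and> (\<exists>U. open U \<and> x \<in> U \<and> U \<inter> {0..1} \<subseteq> K)"
  then obtain U where "open U" "x \<in> U" "U \<inter> {0..1} \<subseteq> K" by blast
  then obtain p where "\<forall>y. prefix_inf p y \<longrightarrow> binval_inf y \<in> U"
    using open_contains_cylinder \<open>x \<in> {0..1}\<close> by (metis atLeastAtMost_iff)
  then have "\<forall>y. prefix_inf p y \<longrightarrow> binval_inf y \<in> K"
    using \<open>U \<inter> {0..1} \<subseteq> K\<close> binval_inf_nonneg binval_inf_le_1 by auto
  then have "entropy_on (f_sigma k s) K = \<infinity>" by (rule entropy_on_cylinder[OF assms(5)])
  moreover have "entropy (f_sigma k s) = \<infinity>"
    unfolding entropy_def using assms(5)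
    by (rule entropy_on_cylinder[where p = "[]"]) (simp add: binval_inf_nonneg binval_inf_le_1)
  ultimately show "entropy_on (f_sigma k s) K = entropy (f_sigma k s) \<and> entropy (f_sigma k s) = \<infinity>"
    by simp
qed

end
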